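(* Let $P_1,P_2$ be quantum programs with finite-dimensional state Hilbert spaces $\mathcal{H}_{P_1},\mathcal{H}_{P_2}$, $d_i=\dim\mathcal{H}_{P_i}$, with denotational semantics $\llbracket P_i\rrbracket$. Let $\mathcal{M}_1=\{M_{10},M_{11}\}$ and $\mathcal{M}_2=\{M_{20},M_{21}\}$ be two-outcome measurements on $\mathcal{H}_{P_1}$ and $\mathcal{H}_{P_2}$ respectively, and set $\mathcal{E}_{ij}(X)=M_{ij}XM_{ij}^\dagger$. Let $\rho\in\mathcal{D}^\le(\mathcal{H}_{P_1}\otimes\mathcal{H}_{P_2})$. If $$\mathrm{tr}\big[\mathcal{E}_{10}\circ(\llbracket P_1\rrbracket\circ\mathcal{E}_{11})^n(\mathrm{tr}_{2}(\rho))\big]=\mathrm{tr}\big[\mathcal{E}_{20}\circ(\llbracket P_2\rrbracket\circ\mathcal{E}_{21})^n(\mathrm{tr}_{1}(\rho))\big]$$ holds for every $0\le n\le d_1^2+d_2^2-1$, then it holds for every $n\ge 0$.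
   Context: A quantum program $P$ acts on the tensor product $\mathcal{H}_P$ of the state spaces of its quantum variables; its denotational semantics $\llbracket P\rrbracket$ is a linear map (quantum operation: completely positive, trace non-increasing) on operators on $\mathcal{H}_P$. A (projective) measurement $\{M_m\}$ is a family of operators with $\sum_m M_m^\dagger M_m=I$. $\mathcal{D}^\le(\mathcal{H})$ denotes partial density operators on $\mathcal{H}$; $\mathrm{tr}_1,\mathrm{tr}_2$ denote partial traces over the first and second tensor factor, so $\mathrm{tr}_2(\rho)$ lives on $\mathcal{H}_{P_1}$ and $\mathrm{tr}_1(\rho)$ on $\mathcal{H}_{P_2}$. *)

theory Defs
  imports "Jordan_Normal_Form.Matrix"
begin

text \<open>The tensor product C^d1 (x) C^d2 is identified with C^(d1*d2)
via the basis index (i,j) |-> i*d2 + j (first factor most significant).\<close>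

definition dagger :: "complex mat \<Rightarrow> complex mat" where
  "dagger A = mat (dim_col A) (dim_row A) (\<lambda>(i,j). cnj (A $$ (j,i)))"

definition mtrace :: "complex mat \<Rightarrow> complex" where
  "mtrace A = (\<Sum>i<dim_row A. A $$ (i,i))"

definition psd :: "nat \<Rightarrow> complex mat \<Rightarrow> bool" where
  "psd d A \<longleftrightarrow> A \<in> carrier_mat d d \<and>
     (\<forall>v \<in> carrier_vec d. (\<Sum>i<d. cnj (v $ i) * (A *\<^sub>v v) $ i) \<in> \<real> \<and>
                           Re (\<Sum>i<d. cnj (v $ i) * (A *\<^sub>v v) $ i) \<ge> 0)"

definition pdo :: "nat \<Rightarrow> complex mat \<Rightarrow> bool" where
  "pdo d \<rho> \<longleftrightarrow> psd d \<rho> \<and> Re (mtrace \<rho>) \<le> 1"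

definition ptrace2 :: "nat \<Rightarrow> nat \<Rightarrow> complex mat \<Rightarrow> complex mat" where
  "ptrace2 d1 d2 \<rho> = mat d1 d1 (\<lambda>(i,i'). \<Sum>j<d2. \<rho> $$ (i*d2 + j, i'*d2 + j))"

definition ptrace1 :: "nat \<Rightarrow> nat \<Rightarrow> complex mat \<Rightarrow> complex mat" where
  "ptrace1 d1 d2 \<rho> = mat d2 d2 (\<lambda>(j,j'). \<Sum>i<d1. \<rho> $$ (i*d2 + j, i*d2 + j'))"

text \<open>(id_k (x) E) applied to an operator Y on C^k (x) C^d, acting blockwise.\<close>
definition ext_id :: "nat \<Rightarrow> nat \<Rightarrow> (complex mat \<Rightarrow> complex mat) \<Rightarrow> complex mat \<Rightarrow> complex mat" where
  "ext_id k d E Y = mat (k*d) (k*d) (\<lambda>(i,j).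
      E (mat d d (\<lambda>(p,q). Y $$ ((i div d)*d + p, (j div d)*d + q))) $$ (i mod d, j mod d))"

definition quantum_operation :: "nat \<Rightarrow> (complex mat \<Rightarrow> complex mat) \<Rightarrow> bool" where
  "quantum_operation d E \<longleftrightarrow>
     (\<forall>X \<in> carrier_mat d d. E X \<in> carrier_mat d d) \<and>
     (\<forall>X \<in> carrier_mat d d. \<forall>Y \<in> carrier_mat d d. E (X + Y) = E X + E Y) \<and>
     (\<forall>X \<in> carrier_mat d d. \<forall>c. E (c \<cdot>\<^sub>m X) = c \<cdot>\<^sub>m E X) \<and>
     (\<forall>k Y. psd (k*d) Y \<longrightarrow> psd (k*d) (ext_id k d E Y)) \<and>
     (\<forall>\<rho>. psd d \<rho> \<longrightarrow> Re (mtrace (E \<rho>)) \<le> Re (mtrace \<rho>))"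

definition measurement2 :: "nat \<Rightarrow> complex mat \<Rightarrow> complex mat \<Rightarrow> bool" where
  "measurement2 d M0 M1 \<longleftrightarrow> M0 \<in> carrier_mat d d \<and> M1 \<in> carrier_mat d d \<and>
     dagger M0 * M0 + dagger M1 * M1 = 1\<^sub>m d"

definition sop :: "complex mat \<Rightarrow> complex mat \<Rightarrow> complex mat" where
  "sop M X = M * X * dagger M"

end

theory Submission
  imports Defs "Jordan_Normal_Form.Determinant"
begin

text \<open>Only linearity of the maps involved matters. The pairs
(X n, Y n) = ((P1 o E11)^n (tr2 \<rho>), (P2 o E21)^n (tr1 \<rho>)) live in a space of dimension
D = d1^2 + d2^2, so some pair with index m \<le> D is a linear combination of the earlier ones,
with the same coefficients in both components. Applying the linear maps, both trace
sequences, and hence their difference, satisfy one linear recurrence of order m. The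
difference vanishes on its first D \<ge> m terms, so it vanishes everywhere.\<close>

lemma linear_recurrence_eq_0:
  fixes g c :: "nat \<Rightarrow> 'a::semiring_0"
  assumes recurrence: "\<And>j. g (m + j) = (\<Sum>k<m. c k * g (k + j))"
    and initial: "\<And>n. n < m \<Longrightarrow> g n = 0"
  shows "g n = 0"
proof (induction n rule: less_induct)
  case (less n)
  show ?case
  proof (cases "n < m")
    case True
    then show ?thesis by (rule initial)
  next
    case False
    then obtain j where n: "n = m + j"
      using le_Suc_ex not_less by blast
    have "g n = (\<Sum>k<m. c k * g (k + j))"
      unfolding n by (rule recurrence)
    also have "\<dots> = 0"
      using less n by (intro sum.neutral) auto
    finally show ?thesis .
  qed
qed

lemma sum_atMost_eq_0_solve_last:
  fixes v a :: "nat \<Rightarrow> 'a::field"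
  assumes sum: "(\<Sum>k\<le>n. v k * a k) = 0"
    and m: "m \<le> n" "v m \<noteq> 0"
    and above: "\<And>k. m < k \<Longrightarrow> k \<le> n \<Longrightarrow> v k = 0"
  shows "a m = (\<Sum>k<m. (- v k / v m) * a k)"
proof -
  have "(\<Sum>k\<le>n. v k * a k) = (\<Sum>k\<le>m. v k * a k)"
    using m above by (intro sum.mono_neutral_right) auto
  also have "\<dots> = (\<Sum>k<m. v k * a k) + v m * a m"
    by (simp add: lessThan_Suc_atMost[symmetric])
  finally have "v m * a m = - (\<Sum>k<m. v k * a k)"
    using sum by (simp add: eq_neg_iff_add_eq_0 add.commute)
  then have "a m = - (\<Sum>k<m. v k * a k) / v m"
    using m(2) by (metis nonzero_mult_div_cancel_left)
  also have "\<dots> = (\<Sum>k<m. (- v k / v m) * a k)"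
    by (simp add: sum_divide_distrib sum_negf[symmetric])
  finally show ?thesis .
qed

lemma vecs_nontrivial_relation:
  fixes f :: "nat \<Rightarrow> 'a::field vec"
  assumes "\<And>k. k \<le> n \<Longrightarrow> f k \<in> carrier_vec n"
  obtains v where "\<exists>k \<le> n. v k \<noteq> 0" and "\<And>i. i < n \<Longrightarrow> (\<Sum>k\<le>n. v k * f k $ i) = 0"
proof -
  \<comment> \<open>Row i < n of A lists the i-th coordinates of f 0, ..., f n; the extra zero row
    forces det A = 0, and a kernel vector of A is the relation sought.\<close>
  define A where "A = mat\<^sub>r (Suc n) (Suc n)
    (\<lambda>i. if i = n then 0\<^sub>v (Suc n) else vec (Suc n) (\<lambda>k. f k $ i))"
  have A: "A \<in> carrier_mat (Suc n) (Suc n)"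
    unfolding A_def by simp
  have "det A = 0"
    unfolding A_def by (rule det_row_0) auto
  then obtain w where w: "w \<in> carrier_vec (Suc n)" "w \<noteq> 0\<^sub>v (Suc n)" "A *\<^sub>v w = 0\<^sub>v (Suc n)"
    using det_0_iff_vec_prod_zero_field[OF A] by blast
  show ?thesis
  proof
    show "\<exists>k \<le> n. w $ k \<noteq> 0"
    proof (rule ccontr)
      assume "\<not> (\<exists>k \<le> n. w $ k \<noteq> 0)"
      then have "w = 0\<^sub>v (Suc n)"
        using w(1) by (intro eq_vecI) (auto simp: less_Suc_eq_le)
      with w(2) show False ..
    qed
    fix i assume i: "i < n"
    have "(\<Sum>k\<le>n. w $ k * f k $ i) = vec (Suc n) (\<lambda>k. f k $ i) \<bullet> w"
      using w(1) unfolding scalar_prod_def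
      by (auto simp: atLeast0LessThan lessThan_Suc_atMost mult.commute)
    also have "\<dots> = (A *\<^sub>v w) $ i"
      using A i unfolding A_def by simp
    finally show "(\<Sum>k\<le>n. w $ k * f k $ i) = 0"
      using w(3) i by simp
  qed
qed

lemma vecs_prefix_dependent:
  fixes f :: "nat \<Rightarrow> 'a::field vec"
  assumes "\<And>k. k \<le> n \<Longrightarrow> f k \<in> carrier_vec n"
  obtains m c where "m \<le> n" and "\<And>i. i < n \<Longrightarrow> f m $ i = (\<Sum>k<m. c k * f k $ i)"
proof -
  obtain v where nontrivial: "\<exists>k \<le> n. v k \<noteq> 0"
    and relation: "\<And>i. i < n \<Longrightarrow> (\<Sum>k\<le>n. v k * f k $ i) = 0"
    using vecs_nontrivial_relation[of n f, OF assms] by blast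
  define m where "m = (GREATEST k. k \<le> n \<and> v k \<noteq> 0)"
  have m: "m \<le> n" "v m \<noteq> 0"
    using GreatestI_ex_nat[of "\<lambda>k. k \<le> n \<and> v k \<noteq> 0" n] nontrivial unfolding m_def by auto
  have above: "v k = 0" if "m < k" "k \<le> n" for k
    using Greatest_le_nat[of "\<lambda>k. k \<le> n \<and> v k \<noteq> 0" k n] that unfolding m_def by force
  show ?thesis
  proof (rule that[OF m(1)])
    fix i assume "i < n"
    show "f m $ i = (\<Sum>k<m. (- v k / v m) * f k $ i)"
      by (rule sum_atMost_eq_0_solve_last[of v "\<lambda>k. f k $ i", OF relation[OF \<open>i < n\<close>] m above])
  qed
qed

definition vec_of_mat :: "nat \<Rightarrow> 'a mat \<Rightarrow> 'a vec" where
  "vec_of_mat d X = vec (d * d) (\<lambda>i. X $$ (i div d, i mod d))"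

definition lincomb_mat ::
    "nat \<Rightarrow> (nat \<Rightarrow> 'a::comm_ring_1) \<Rightarrow> (nat \<Rightarrow> 'a mat) \<Rightarrow> nat \<Rightarrow> 'a mat" where
  "lincomb_mat d c X m = mat d d (\<lambda>ij. \<Sum>k<m. c k * X k $$ ij)"

lemma mult_add_less_square:
  fixes a b d :: nat
  assumes "a < d" "b < d"
  shows "a * d + b < d * d"
proof -
  have "a * d + b < Suc a * d"
    using assms(2) by simp
  also have "\<dots> \<le> d * d"
    using assms(1) by (intro mult_le_mono1) simp
  finally show ?thesis .
qed

lemma dim_vec_of_mat [simp]: "dim_vec (vec_of_mat d X) = d * d"
  unfolding vec_of_mat_def by simp

lemma vec_of_mat_index:
  assumes "a < d" "b < d"
  shows "vec_of_mat d X $ (a * d + b) = X $$ (a, b)"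
  using assms mult_add_less_square[OF assms] unfolding vec_of_mat_def by simp

lemma index_lincomb_mat:
  "a < d \<Longrightarrow> b < d \<Longrightarrow> lincomb_mat d c X m $$ (a, b) = (\<Sum>k<m. c k * X k $$ (a, b))"
  unfolding lincomb_mat_def by simp

lemma lincomb_mat_carrier [simp]: "lincomb_mat d c X m \<in> carrier_mat d d"
  unfolding lincomb_mat_def by simp

lemma eq_lincomb_mat_if_vec_of_mat:
  assumes "X m \<in> carrier_mat d d"
    and "\<And>i. i < d * d \<Longrightarrow> vec_of_mat d (X m) $ i = (\<Sum>k<m. c k * vec_of_mat d (X k) $ i)"
  shows "X m = lincomb_mat d c X m"
proof (rule eq_matI)
  fix a b assume "a < dim_row (lincomb_mat d c X m)" "b < dim_col (lincomb_mat d c X m)"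
  then have ab: "a < d" "b < d"
    by (simp_all add: lincomb_mat_def)
  show "X m $$ (a, b) = lincomb_mat d c X m $$ (a, b)"
    using assms(2)[OF mult_add_less_square[OF ab]]
    by (simp add: vec_of_mat_index[OF ab] index_lincomb_mat[OF ab])
qed (use assms(1) in \<open>simp_all add: lincomb_mat_def\<close>)

lemma mat_pair_prefix_dependent:
  fixes X Y :: "nat \<Rightarrow> 'a::field mat"
  assumes X: "\<And>k. X k \<in> carrier_mat d1 d1" and Y: "\<And>k. Y k \<in> carrier_mat d2 d2"
  obtains m c where "m \<le> d1 * d1 + d2 * d2"
    and "X m = lincomb_mat d1 c X m" and "Y m = lincomb_mat d2 c Y m"
proof -
  define f where "f k = vec_of_mat d1 (X k) @\<^sub>v vec_of_mat d2 (Y k)" for k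
  have f: "f k \<in> carrier_vec (d1 * d1 + d2 * d2)" for k
    unfolding f_def carrier_vec_def by simp
  have f_X: "f k $ i = vec_of_mat d1 (X k) $ i" if "i < d1 * d1" for k i
    using that unfolding f_def by simp
  have f_Y: "f k $ (d1 * d1 + i) = vec_of_mat d2 (Y k) $ i" if "i < d2 * d2" for k i
    using that unfolding f_def by simp
  obtain m c where m: "m \<le> d1 * d1 + d2 * d2"
    and relation: "\<And>i. i < d1 * d1 + d2 * d2 \<Longrightarrow> f m $ i = (\<Sum>k<m. c k * f k $ i)"
    using vecs_prefix_dependent[of "d1 * d1 + d2 * d2" f, OF f] by blast
  have "X m = lincomb_mat d1 c X m"
  proof (rule eq_lincomb_mat_if_vec_of_mat[OF X])
    fix i assume "i < d1 * d1"
    then show "vec_of_mat d1 (X m) $ i = (\<Sum>k<m. c k * vec_of_mat d1 (X k) $ i)"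
      using relation[of i] f_X by simp
  qed
  moreover have "Y m = lincomb_mat d2 c Y m"
  proof (rule eq_lincomb_mat_if_vec_of_mat[OF Y])
    fix i assume "i < d2 * d2"
    then show "vec_of_mat d2 (Y m) $ i = (\<Sum>k<m. c k * vec_of_mat d2 (Y k) $ i)"
      using relation[of "d1 * d1 + i"] f_Y by simp
  qed
  ultimately show ?thesis
    by (rule that[OF m])
qed

definition linear_mat_map :: "nat \<Rightarrow> ('a::comm_ring_1 mat \<Rightarrow> 'a mat) \<Rightarrow> bool" where
  "linear_mat_map d T \<longleftrightarrow> (\<forall>X \<in> carrier_mat d d. T X \<in> carrier_mat d d) \<and>
     (\<forall>X \<in> carrier_mat d d. \<forall>Y \<in> carrier_mat d d. T (X + Y) = T X + T Y) \<and>
     (\<forall>X \<in> carrier_mat d d. \<forall>c. T (c \<cdot>\<^sub>m X) = c \<cdot>\<^sub>m T X)"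

lemma linear_mat_map_carrier:
  "linear_mat_map d T \<Longrightarrow> X \<in> carrier_mat d d \<Longrightarrow> T X \<in> carrier_mat d d"
  unfolding linear_mat_map_def by blast

lemma linear_mat_map_comp:
  "linear_mat_map d S \<Longrightarrow> linear_mat_map d T \<Longrightarrow> linear_mat_map d (S \<circ> T)"
  unfolding linear_mat_map_def by auto

lemma linear_mat_map_id: "linear_mat_map d id"
  unfolding linear_mat_map_def by simp

lemma linear_mat_map_funpow: "linear_mat_map d T \<Longrightarrow> linear_mat_map d (T ^^ n)"
  by (induction n) (simp_all add: linear_mat_map_id linear_mat_map_comp)

lemma linear_mat_map_zero:
  assumes "linear_mat_map d T"
  shows "T (0\<^sub>m d d) = 0\<^sub>m d d"
proof -
  have "T (0\<^sub>m d d) = T (0 \<cdot>\<^sub>m 0\<^sub>m d d)"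
    by (simp add: smult_zero_mat)
  also have "\<dots> = 0 \<cdot>\<^sub>m T (0\<^sub>m d d)"
    using assms zero_carrier_mat[of d d] unfolding linear_mat_map_def by blast
  also have "\<dots> = 0\<^sub>m d d"
    using linear_mat_map_carrier[OF assms zero_carrier_mat] by (intro eq_matI) auto
  finally show ?thesis .
qed

lemma lincomb_mat_0: "lincomb_mat d c X 0 = 0\<^sub>m d d"
  unfolding lincomb_mat_def by (intro eq_matI) auto

lemma lincomb_mat_Suc:
  "X m \<in> carrier_mat d d \<Longrightarrow>
    lincomb_mat d c X (Suc m) = lincomb_mat d c X m + c m \<cdot>\<^sub>m X m"
  unfolding lincomb_mat_def by (intro eq_matI) auto

lemma linear_mat_map_lincomb:
  assumes T: "linear_mat_map d T" and X: "\<And>k. k < m \<Longrightarrow> X k \<in> carrier_mat d d"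
  shows "T (lincomb_mat d c X m) = lincomb_mat d c (T \<circ> X) m"
  using X
proof (induction m)
  case 0
  show ?case
    using linear_mat_map_zero[OF T] by (simp add: lincomb_mat_0)
next
  case (Suc m)
  have Xm: "X m \<in> carrier_mat d d"
    using Suc.prems by simp
  have "T (lincomb_mat d c X (Suc m)) = T (lincomb_mat d c X m) + c m \<cdot>\<^sub>m T (X m)"
    using T Xm unfolding lincomb_mat_Suc[where X = X and m = m, OF Xm] linear_mat_map_def by simp
  then show ?case
    using Suc linear_mat_map_carrier[OF T Xm] by (simp add: lincomb_mat_Suc)
qed

lemma mtrace_lincomb_mat:
  assumes "\<And>k. k < m \<Longrightarrow> X k \<in> carrier_mat d d"
  shows "mtrace (lincomb_mat d c X m) = (\<Sum>k<m. c k * mtrace (X k))"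
proof -
  have "mtrace (lincomb_mat d c X m) = (\<Sum>i<d. \<Sum>k<m. c k * X k $$ (i, i))"
    unfolding mtrace_def lincomb_mat_def by simp
  also have "\<dots> = (\<Sum>k<m. c k * (\<Sum>i<d. X k $$ (i, i)))"
    by (simp add: sum.swap[of _ "{..<d}"] sum_distrib_left)
  also have "\<dots> = (\<Sum>k<m. c k * mtrace (X k))"
    using assms by (intro sum.cong) (auto simp: mtrace_def)
  finally show ?thesis .
qed

lemma linear_mat_map_sop:
  assumes "M \<in> carrier_mat d d"
  shows "linear_mat_map d (sop M)"
proof -
  have D: "dagger M \<in> carrier_mat d d"
    using assms unfolding dagger_def by auto
  show ?thesis
    unfolding linear_mat_map_def sop_def
    using assms D
    by (auto simp: mult_add_distrib_mat[of _ d d] add_mult_distrib_mat[of _ d d]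
        mult_smult_distrib mult_smult_assoc_mat[of _ d d _ d])
qed

lemma quantum_operation_linear: "quantum_operation d E \<Longrightarrow> linear_mat_map d E"
  unfolding quantum_operation_def linear_mat_map_def by blast

lemma trace_sop_funpow_recurrence:
  assumes T: "linear_mat_map d T" and \<sigma>: "\<sigma> \<in> carrier_mat d d" and M: "M \<in> carrier_mat d d"
    and dependence: "(T ^^ m) \<sigma> = lincomb_mat d c (\<lambda>k. (T ^^ k) \<sigma>) m"
  shows "mtrace (sop M ((T ^^ (m + j)) \<sigma>)) = (\<Sum>k<m. c k * mtrace (sop M ((T ^^ (k + j)) \<sigma>)))"
proof -
  let ?S = "sop M \<circ> T ^^ j"
  have S: "linear_mat_map d ?S"
    by (intro linear_mat_map_comp linear_mat_map_sop linear_mat_map_funpow M T)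
  have shift: "(T ^^ (k + j)) \<sigma> = (T ^^ j) ((T ^^ k) \<sigma>)" for k
    by (simp add: funpow_add add.commute[of k])
  have "sop M ((T ^^ (m + j)) \<sigma>) = ?S (lincomb_mat d c (\<lambda>k. (T ^^ k) \<sigma>) m)"
    by (simp add: shift dependence)
  also have "\<dots> = lincomb_mat d c (\<lambda>k. sop M ((T ^^ (k + j)) \<sigma>)) m"
    using linear_mat_map_lincomb[OF S] linear_mat_map_carrier[OF linear_mat_map_funpow[OF T] \<sigma>]
    by (simp add: shift comp_def)
  finally have lincomb:
    "sop M ((T ^^ (m + j)) \<sigma>) = lincomb_mat d c (\<lambda>k. sop M ((T ^^ (k + j)) \<sigma>)) m" .
  have "sop M ((T ^^ (k + j)) \<sigma>) \<in> carrier_mat d d" for k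
    using linear_mat_map_carrier[OF S] linear_mat_map_carrier[OF linear_mat_map_funpow[OF T] \<sigma>]
    by (simp add: shift)
  then show ?thesis
    by (simp add: lincomb mtrace_lincomb_mat)
qed

theorem lemma5p5:
  fixes d1 d2 :: nat
    and P1 P2 :: "complex mat \<Rightarrow> complex mat"
    and M10 M11 M20 M21 \<rho> :: "complex mat"
  assumes "quantum_operation d1 P1"
    and "quantum_operation d2 P2"
    and "measurement2 d1 M10 M11"
    and "measurement2 d2 M20 M21"
    and "pdo (d1 * d2) \<rho>"
    and "\<forall>n \<le> d1^2 + d2^2 - 1.
           mtrace (sop M10 (((P1 \<circ> sop M11) ^^ n) (ptrace2 d1 d2 \<rho>))) =
           mtrace (sop M20 (((P2 \<circ> sop M21) ^^ n) (ptrace1 d1 d2 \<rho>)))"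
  shows "\<forall>n.
           mtrace (sop M10 (((P1 \<circ> sop M11) ^^ n) (ptrace2 d1 d2 \<rho>))) =
           mtrace (sop M20 (((P2 \<circ> sop M21) ^^ n) (ptrace1 d1 d2 \<rho>)))"
proof -
  let ?T1 = "P1 \<circ> sop M11" and ?\<sigma>1 = "ptrace2 d1 d2 \<rho>"
  let ?T2 = "P2 \<circ> sop M21" and ?\<sigma>2 = "ptrace1 d1 d2 \<rho>"
  have M: "M10 \<in> carrier_mat d1 d1" "M11 \<in> carrier_mat d1 d1"
    "M20 \<in> carrier_mat d2 d2" "M21 \<in> carrier_mat d2 d2"
    using assms(3,4) unfolding measurement2_def by auto
  have T1: "linear_mat_map d1 ?T1" and T2: "linear_mat_map d2 ?T2"
    using assms(1,2) M by (auto intro: linear_mat_map_comp quantum_operation_linear linear_mat_map_sop)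
  have \<sigma>1: "?\<sigma>1 \<in> carrier_mat d1 d1" and \<sigma>2: "?\<sigma>2 \<in> carrier_mat d2 d2"
    unfolding ptrace1_def ptrace2_def by simp_all
  obtain m c where m: "m \<le> d1 * d1 + d2 * d2"
    and dep1: "(?T1 ^^ m) ?\<sigma>1 = lincomb_mat d1 c (\<lambda>k. (?T1 ^^ k) ?\<sigma>1) m"
    and dep2: "(?T2 ^^ m) ?\<sigma>2 = lincomb_mat d2 c (\<lambda>k. (?T2 ^^ k) ?\<sigma>2) m"
    using mat_pair_prefix_dependent[of "\<lambda>k. (?T1 ^^ k) ?\<sigma>1" d1 "\<lambda>k. (?T2 ^^ k) ?\<sigma>2" d2]
      linear_mat_map_carrier[OF linear_mat_map_funpow[OF T1] \<sigma>1]
      linear_mat_map_carrier[OF linear_mat_map_funpow[OF T2] \<sigma>2]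
    by blast
  define g where "g n = mtrace (sop M10 ((?T1 ^^ n) ?\<sigma>1)) - mtrace (sop M20 ((?T2 ^^ n) ?\<sigma>2))"
    for n
  have "g (m + j) = (\<Sum>k<m. c k * g (k + j))" for j
    unfolding g_def trace_sop_funpow_recurrence[OF T1 \<sigma>1 M(1) dep1]
      trace_sop_funpow_recurrence[OF T2 \<sigma>2 M(3) dep2]
    by (simp add: sum_subtractf right_diff_distrib)
  moreover have "g n = 0" if "n < m" for n
    using assms(6) m that unfolding g_def by (simp add: power2_eq_square)
  ultimately have "g n = 0" for n
    by (rule linear_recurrence_eq_0)
  then show ?thesis
    unfolding g_def by simp
qed

end
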